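(* Assume $\overline{c}>p$. Then there exist constants $K_2>0$ and $K_3>0$ such that $$V(x,c_1)-V(x,c_2)\le\left[K_2+\frac{K_3x}{(c_1-p)^2}\right](c_2-c_1)$$ for all $x\ge0$ and $p<c_1\le c_2\le\overline{c}$.
   Context: Cramér–Lundberg model: the uncontrolled surplus is $X_t=x+pt-\sum_{i=1}^{N_t}U_i$, where $x\ge0$ is the initial surplus, $p>0$ the premium rate, $N_t$ a Poisson process with intensity $\beta>0$, and the claims $U_i$ are i.i.d. positive random variables, independent of $N$, with continuous distribution function $F$; $p>\beta\mathbb{E}[U_1]$. Standing assumption (A1): $F$ is globally Lipschitz, $0\le F(y)-F(x)\le K(y-x)$ for $x<y$. Let $(\mathcal{F}_t)$ be the completed filtration generated by $X$. Fix $\overline{c}>0$ and $q>0$. $\Pi_{x,c,\overline{c}}$ is the set of càdlàg, adapted, non-decreasing processes $C$ with $c\le C_t\le\overline{c}$; $X^C_t=X_t-\int_0^tC_sds$ ($X_0=x$), $\tau=\inf\{t\ge0:X^C_t<0\}$, $J(x;C)=\mathbb{E}[\int_0^\tau e^{-qs}C_sds]$, $V(x,c)=\sup_{C\in\Pi_{x,c,\overline{c}}}J(x;C)$. *)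

theory Defs
  imports "HOL-Probability.Probability"
begin

text \<open>Cramer-Lundberg model built from i.i.d. exponential inter-arrival times E 0, E 1, ...
  (Poisson process of intensity beta) and i.i.d. claims U 0, U 1, ...\<close>

definition arrival :: "(nat \<Rightarrow> 'w \<Rightarrow> real) \<Rightarrow> nat \<Rightarrow> 'w \<Rightarrow> real" where
  "arrival E n \<omega> = (\<Sum>i\<le>n. E i \<omega>)"

definition Ncount :: "(nat \<Rightarrow> 'w \<Rightarrow> real) \<Rightarrow> real \<Rightarrow> 'w \<Rightarrow> nat" where
  "Ncount E t \<omega> = card {n. arrival E n \<omega> \<le> t}"

definition surplus :: "real \<Rightarrow> (nat \<Rightarrow> 'w \<Rightarrow> real) \<Rightarrow> (nat \<Rightarrow> 'w \<Rightarrow> real) \<Rightarrow> real \<Rightarrow> real \<Rightarrow> 'w \<Rightarrow> real" where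
  "surplus p E U x t \<omega> = x + p * t - (\<Sum>i<Ncount E t \<omega>. U i \<omega>)"

definition nat_filtration :: "'w measure \<Rightarrow> (real \<Rightarrow> 'w \<Rightarrow> real) \<Rightarrow> real \<Rightarrow> 'w set set" where
  "nat_filtration M Y t = sigma_sets (space M)
     ({Y s -` A \<inter> space M | s A. 0 \<le> s \<and> s \<le> t \<and> A \<in> sets borel}
      \<union> {N. N \<subseteq> space M \<and> (\<exists>A\<in>null_sets M. N \<subseteq> A)})"

definition adapted_to :: "'w measure \<Rightarrow> (real \<Rightarrow> 'w set set) \<Rightarrow> (real \<Rightarrow> 'w \<Rightarrow> real) \<Rightarrow> bool" where
  "adapted_to M Fl C \<longleftrightarrow> (\<forall>t\<ge>0. \<forall>A\<in>sets borel. C t -` A \<inter> space M \<in> Fl t)"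

definition admissible :: "'w measure \<Rightarrow> (real \<Rightarrow> 'w set set) \<Rightarrow> real \<Rightarrow> real \<Rightarrow> (real \<Rightarrow> 'w \<Rightarrow> real) \<Rightarrow> bool" where
  "admissible M Fl c cbar C \<longleftrightarrow> adapted_to M Fl C \<and>
     (\<forall>\<omega>\<in>space M.
        (\<forall>t\<ge>0. c \<le> C t \<omega> \<and> C t \<omega> \<le> cbar) \<and>
        mono_on {0..} (\<lambda>t. C t \<omega>) \<and>
        (\<forall>t\<ge>0. continuous (at_right t) (\<lambda>s. C s \<omega>)) \<and>
        (\<forall>t>0. \<exists>l. ((\<lambda>s. C s \<omega>) \<longlongrightarrow> l) (at_left t)))"

definition controlled :: "(real \<Rightarrow> 'w \<Rightarrow> real) \<Rightarrow> (real \<Rightarrow> 'w \<Rightarrow> real) \<Rightarrow> real \<Rightarrow> 'w \<Rightarrow> real" where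
  "controlled X C t \<omega> = X t \<omega> - integral {0..t} (\<lambda>s. C s \<omega>)"

definition ruin_time :: "(real \<Rightarrow> 'w \<Rightarrow> real) \<Rightarrow> 'w \<Rightarrow> ereal" where
  "ruin_time Y \<omega> = (if \<exists>t\<ge>0. Y t \<omega> < 0 then ereal (Inf {t. 0 \<le> t \<and> Y t \<omega> < 0}) else \<infinity>)"

definition payoff :: "real \<Rightarrow> (real \<Rightarrow> 'w \<Rightarrow> real) \<Rightarrow> (real \<Rightarrow> 'w \<Rightarrow> real) \<Rightarrow> 'w \<Rightarrow> real" where
  "payoff q X C \<omega> = (\<integral>s. indicator {s. 0 \<le> s \<and> ereal s < ruin_time (controlled X C) \<omega>} s
                         * (exp (- q * s) * C s \<omega>) \<partial>lborel)"

definition Jfun :: "'w measure \<Rightarrow> real \<Rightarrow> (real \<Rightarrow> 'w \<Rightarrow> real) \<Rightarrow> (real \<Rightarrow> 'w \<Rightarrow> real) \<Rightarrow> real" where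
  "Jfun M q X C = (\<integral>\<omega>. payoff q X C \<omega> \<partial>M)"

definition Vfun :: "'w measure \<Rightarrow> real \<Rightarrow> (nat \<Rightarrow> 'w \<Rightarrow> real) \<Rightarrow> (nat \<Rightarrow> 'w \<Rightarrow> real)
                     \<Rightarrow> real \<Rightarrow> real \<Rightarrow> real \<Rightarrow> real \<Rightarrow> real" where
  "Vfun M p E U q cbar x c =
     (SUP C \<in> {C. admissible M (nat_filtration M (surplus p E U x)) c cbar C}.
        Jfun M q (surplus p E U x) C)"

end

(* Once the consumption rate never drops below c > p, the controlled surplus
   x + p t - (claims) - \<integral>C decreases at rate at least c - p, so ruin happens by time
   x/(c - p) on every path.  Given a strategy C with floor c1, the strategy max(C, c2)
   consumes at most c2 - c1 more per unit of time.  Hence at its ruin time T <= x/(c2 - p)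
   the surplus under C is still below (c2 - c1) T, and from then on it falls at rate
   c1 - p: C is ruined at most (c2 - c1) x/(c1 - p)^2 later.  As the discounted payoff
   rate is at most cbar, J(x; C) <= J(x; max(C, c2)) + cbar (c2 - c1) x/(c1 - p)^2, and
   taking suprema gives the claim with K3 = cbar.

   Two measure-theoretic points need care.  The surplus grows at rate at most p only if the
   arrival times are locally finite, which holds almost surely.  And for the expectation
   of the new payoff to be meaningful, max(C, c2) is changed on a null set into a process
   with a jointly measurable version; the ruin time is then measurable because ruin is
   detected at rational times and at arrival times. *)

theory Submission
  imports Defs
begin

section \<open>Integrals of monotone controls\<close>

lemma mono_on_integrable_on:
  fixes g :: "real \<Rightarrow> real"
  assumes "mono_on {0..} g" "0 \<le> a"
  shows "g integrable_on {a..b}"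
  by (rule integrable_on_mono_on) (use assms in \<open>auto simp: mono_on_def\<close>)

lemma integral_increment:
  fixes g :: "real \<Rightarrow> real"
  assumes "mono_on {0..} g" "0 \<le> t" "t \<le> s"
  shows "integral {0..s} g - integral {0..t} g = integral {t..s} g"
  using Henstock_Kurzweil_Integration.integral_combine[OF assms(2,3)
      mono_on_integrable_on[OF assms(1) order_refl]]
  by simp

lemma integral_increment_ge:
  fixes g :: "real \<Rightarrow> real"
  assumes "mono_on {0..} g" "0 \<le> t" "t \<le> s" "\<And>u. u \<ge> 0 \<Longrightarrow> c \<le> g u"
  shows "c * (s - t) \<le> integral {0..s} g - integral {0..t} g"
proof -
  have "integral {t..s} (\<lambda>_. c) \<le> integral {t..s} g"
    by (rule integral_le) (use assms mono_on_integrable_on in auto)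
  then show ?thesis using assms(3) by (simp add: integral_increment[OF assms(1-3)] mult.commute)
qed

lemma integral_increment_le:
  fixes g :: "real \<Rightarrow> real"
  assumes "mono_on {0..} g" "0 \<le> t" "t \<le> s" "\<And>u. u \<ge> 0 \<Longrightarrow> g u \<le> c"
  shows "integral {0..s} g - integral {0..t} g \<le> c * (s - t)"
proof -
  have "integral {t..s} g \<le> integral {t..s} (\<lambda>_. c)"
    by (rule integral_le) (use assms mono_on_integrable_on in auto)
  then show ?thesis using assms(3) by (simp add: integral_increment[OF assms(1-3)] mult.commute)
qed

lemma integral_diff_le_of_le_add:
  fixes g h :: "real \<Rightarrow> real"
  assumes "mono_on {0..} g" "mono_on {0..} h" "0 \<le> t" "\<And>u. u \<ge> 0 \<Longrightarrow> h u \<le> g u + d"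
  shows "integral {0..t} h - integral {0..t} g \<le> d * t"
proof -
  have g: "g integrable_on {0..t}" and h: "h integrable_on {0..t}"
    using mono_on_integrable_on assms by auto
  have "integral {0..t} h \<le> integral {0..t} (\<lambda>u. g u + d)"
    by (rule integral_le) (use g h assms in \<open>auto intro: integrable_add\<close>)
  also have "\<dots> = integral {0..t} g + d * t"
    using assms(3) integral_add[OF g integrable_const_ivl[of d 0 t]] by simp
  finally show ?thesis by simp
qed

lemma integral_le_nonneg_majorant:
  fixes f g :: "'a \<Rightarrow> real"
  assumes "integrable M g" "AE x in M. f x \<le> g x" "AE x in M. 0 \<le> g x"
  shows "integral\<^sup>L M f \<le> integral\<^sup>L M g"
proof (cases "integrable M f")
  case True
  then show ?thesis using assms(1,2) by (rule integral_mono_AE)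
next
  case False
  then show ?thesis using assms(3) by (simp add: not_integrable_integral_eq integral_nonneg_AE)
qed

section \<open>Ruin along a single path\<close>

definition ruin_set :: "(real \<Rightarrow> 'w \<Rightarrow> real) \<Rightarrow> 'w \<Rightarrow> real set" where
  "ruin_set Y \<omega> = {t. 0 \<le> t \<and> Y t \<omega> < 0}"

lemma bdd_below_ruin_set: "bdd_below (ruin_set Y \<omega>)"
  by (rule bdd_belowI[of _ 0]) (auto simp: ruin_set_def)

lemma Inf_ruin_set_nonneg: "ruin_set Y \<omega> \<noteq> {} \<Longrightarrow> 0 \<le> Inf (ruin_set Y \<omega>)"
  by (rule cInf_greatest) (auto simp: ruin_set_def)

lemma ruin_time_eq_Inf: "ruin_set Y \<omega> \<noteq> {} \<Longrightarrow> ruin_time Y \<omega> = ereal (Inf (ruin_set Y \<omega>))"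
  by (auto simp: ruin_time_def ruin_set_def)

lemma Inf_ruin_set_le: "t \<in> ruin_set Y \<omega> \<Longrightarrow> Inf (ruin_set Y \<omega>) \<le> t"
  by (rule cInf_lower[OF _ bdd_below_ruin_set])

lemma ereal_le_ruin_time_iff:
  "ereal a \<le> ruin_time Y \<omega> \<longleftrightarrow> (\<forall>t. 0 \<le> t \<and> t < a \<longrightarrow> 0 \<le> Y t \<omega>)"
proof -
  have "ereal a \<le> ruin_time Y \<omega> \<longleftrightarrow> (\<forall>t\<in>ruin_set Y \<omega>. a \<le> t)"
  proof (cases "ruin_set Y \<omega> = {}")
    case True
    then have "\<not> (\<exists>t\<ge>0. Y t \<omega> < 0)" unfolding ruin_set_def by blast
    then have "ruin_time Y \<omega> = \<infinity>" unfolding ruin_time_def by (rule if_not_P)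
    then show ?thesis using True by simp
  next
    case False
    then show ?thesis by (simp add: ruin_time_eq_Inf le_cInf_iff bdd_below_ruin_set)
  qed
  also have "\<dots> \<longleftrightarrow> (\<forall>t. 0 \<le> t \<and> t < a \<longrightarrow> 0 \<le> Y t \<omega>)"
    unfolding ruin_set_def by (auto simp: not_less[symmetric])
  finally show ?thesis .
qed

lemma ruin_before_deadline:
  fixes X C :: "real \<Rightarrow> 'w \<Rightarrow> real"
  assumes X: "\<And>t. t \<ge> 0 \<Longrightarrow> X t \<omega> \<le> x + p * t"
    and C: "mono_on {0..} (\<lambda>t. C t \<omega>)" "\<And>t. t \<ge> 0 \<Longrightarrow> c \<le> C t \<omega>"
    and pc: "p < c" and x: "0 \<le> x"
  shows "ruin_set (controlled X C) \<omega> \<noteq> {}" "Inf (ruin_set (controlled X C) \<omega>) \<le> x / (c - p)"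
proof -
  have late: "{x / (c - p)<..} \<subseteq> ruin_set (controlled X C) \<omega>"
  proof
    fix t assume "t \<in> {x / (c - p)<..}"
    then have "x / (c - p) < t" by simp
    moreover have "0 \<le> x / (c - p)" using x pc by simp
    ultimately have t0: "0 \<le> t" by linarith
    have "x < (c - p) * t"
      using \<open>x / (c - p) < t\<close> pc by (simp add: pos_divide_less_eq mult.commute)
    have "c * t \<le> integral {0..t} (\<lambda>s. C s \<omega>)"
      using integral_increment_ge[OF C(1) order_refl t0] C(2) by simp
    then show "t \<in> ruin_set (controlled X C) \<omega>"
      using X[OF t0] t0 \<open>x < (c - p) * t\<close> by (auto simp: ruin_set_def controlled_def algebra_simps)
  qed
  then show "ruin_set (controlled X C) \<omega> \<noteq> {}" by auto
  show "Inf (ruin_set (controlled X C) \<omega>) \<le> x / (c - p)"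
    using cInf_superset_mono[OF _ bdd_below_ruin_set late] by simp
qed

lemma ruin_set_delay:
  fixes X C D :: "real \<Rightarrow> 'w \<Rightarrow> real"
  assumes X: "\<And>t s. 0 \<le> t \<Longrightarrow> t \<le> s \<Longrightarrow> X s \<omega> \<le> X t \<omega> + p * (s - t)"
    and C: "mono_on {0..} (\<lambda>t. C t \<omega>)" "\<And>t. t \<ge> 0 \<Longrightarrow> c1 \<le> C t \<omega>"
    and D: "mono_on {0..} (\<lambda>t. D t \<omega>)" "\<And>t. t \<ge> 0 \<Longrightarrow> D t \<omega> \<le> C t \<omega> + (c2 - c1)"
    and c: "p < c1" "c1 \<le> c2"
    and t: "t \<in> ruin_set (controlled X D) \<omega>" and e: "0 < e"
  shows "(1 + (c2 - c1) / (c1 - p)) * t + e \<in> ruin_set (controlled X C) \<omega>"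
proof -
  define s where "s = (1 + (c2 - c1) / (c1 - p)) * t + e"
  have t0: "0 \<le> t" and neg: "controlled X D t \<omega> < 0" using t by (auto simp: ruin_set_def)
  have "0 \<le> (c2 - c1) / (c1 - p) * t" using c t0 by simp
  then have ts: "t \<le> s" using e by (simp add: s_def algebra_simps)
  have "integral {0..t} (\<lambda>u. D u \<omega>) - integral {0..t} (\<lambda>u. C u \<omega>) \<le> (c2 - c1) * t"
    by (rule integral_diff_le_of_le_add[OF C(1) D(1) t0 D(2)])
  then have "controlled X C t \<omega> < (c2 - c1) * t"
    using neg by (simp add: controlled_def)
  moreover have "controlled X C s \<omega> \<le> controlled X C t \<omega> - (c1 - p) * (s - t)"
    using integral_increment_ge[OF C(1) t0 ts C(2)] X[OF t0 ts]
    by (simp add: controlled_def algebra_simps)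
  moreover have "(c1 - p) * (s - t) = (c2 - c1) * t + (c1 - p) * e"
    using c by (simp add: s_def field_simps)
  ultimately have "controlled X C s \<omega> < - ((c1 - p) * e)" by linarith
  also have "\<dots> < 0" using c e by simp
  finally show ?thesis using t0 ts by (simp add: ruin_set_def s_def)
qed

lemma Inf_ruin_set_delay:
  fixes X C D :: "real \<Rightarrow> 'w \<Rightarrow> real"
  assumes X: "\<And>t s. 0 \<le> t \<Longrightarrow> t \<le> s \<Longrightarrow> X s \<omega> \<le> X t \<omega> + p * (s - t)"
    and C: "mono_on {0..} (\<lambda>t. C t \<omega>)" "\<And>t. t \<ge> 0 \<Longrightarrow> c1 \<le> C t \<omega>"
    and D: "mono_on {0..} (\<lambda>t. D t \<omega>)" "\<And>t. t \<ge> 0 \<Longrightarrow> D t \<omega> \<le> C t \<omega> + (c2 - c1)"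
    and c: "p < c1" "c1 \<le> c2"
    and ruin: "ruin_set (controlled X D) \<omega> \<noteq> {}"
  shows "Inf (ruin_set (controlled X C) \<omega>)
    \<le> (1 + (c2 - c1) / (c1 - p)) * Inf (ruin_set (controlled X D) \<omega>)"
proof -
  let ?k = "1 + (c2 - c1) / (c1 - p)"
  have k: "0 < ?k" using c by (simp add: add_pos_nonneg)
  have "Inf (ruin_set (controlled X C) \<omega>) / ?k \<le> t" if "t \<in> ruin_set (controlled X D) \<omega>" for t
  proof -
    have "Inf (ruin_set (controlled X C) \<omega>) \<le> ?k * t"
    proof (rule field_le_epsilon)
      fix e :: real assume "0 < e"
      show "Inf (ruin_set (controlled X C) \<omega>) \<le> ?k * t + e"
        by (rule Inf_ruin_set_le, rule ruin_set_delay[where X=X and C=C and D=D and \<omega>=\<omega>])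
          (use X C D c that \<open>0 < e\<close> in auto)
    qed
    then show ?thesis using k by (simp add: divide_le_eq mult.commute)
  qed
  then have "Inf (ruin_set (controlled X C) \<omega>) / ?k \<le> Inf (ruin_set (controlled X D) \<omega>)"
    by (rule cInf_greatest[OF ruin])
  then show ?thesis using k by (simp add: divide_le_eq mult.commute)
qed

lemma Inf_ruin_set_le_add:
  fixes X C D :: "real \<Rightarrow> 'w \<Rightarrow> real"
  assumes X: "\<And>t s. 0 \<le> t \<Longrightarrow> t \<le> s \<Longrightarrow> X s \<omega> \<le> X t \<omega> + p * (s - t)"
      "\<And>t. t \<ge> 0 \<Longrightarrow> X t \<omega> \<le> x + p * t"
    and C: "mono_on {0..} (\<lambda>t. C t \<omega>)" "\<And>t. t \<ge> 0 \<Longrightarrow> c1 \<le> C t \<omega>"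
    and D: "mono_on {0..} (\<lambda>t. D t \<omega>)" "\<And>t. t \<ge> 0 \<Longrightarrow> c2 \<le> D t \<omega>"
      "\<And>t. t \<ge> 0 \<Longrightarrow> D t \<omega> \<le> C t \<omega> + (c2 - c1)"
    and c: "p < c1" "c1 \<le> c2" and x: "0 \<le> x"
  shows "Inf (ruin_set (controlled X C) \<omega>) \<le> Inf (ruin_set (controlled X D) \<omega>) + (c2 - c1) * x / (c1 - p)^2"
proof -
  define T2 where "T2 = Inf (ruin_set (controlled X D) \<omega>)"
  have "p < c2" using c by simp
  note ruin2 = ruin_before_deadline[where X=X and C=D and \<omega>=\<omega>, OF X(2) D(1,2) \<open>p < c2\<close> x]
  have "T2 \<le> x / (c1 - p)"
    using ruin2(2) divide_left_mono[of "c1 - p" "c2 - p" x] c x by (simp add: T2_def)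
  then have "(c2 - c1) / (c1 - p) * T2 \<le> (c2 - c1) / (c1 - p) * (x / (c1 - p))"
    using c by (intro mult_left_mono) auto
  also have "\<dots> = (c2 - c1) * x / (c1 - p)^2"
    by (simp add: power2_eq_square)
  finally have "(c2 - c1) / (c1 - p) * T2 \<le> (c2 - c1) * x / (c1 - p)^2" .
  moreover have "Inf (ruin_set (controlled X C) \<omega>) \<le> T2 + (c2 - c1) / (c1 - p) * T2"
    using Inf_ruin_set_delay[where X=X and C=C and D=D and \<omega>=\<omega>, OF X(1) C D(1,3) c ruin2(1)]
    by (simp add: T2_def algebra_simps)
  ultimately show ?thesis by (simp add: T2_def)
qed

lemma payoff_nonneg:
  assumes "\<And>t. t \<ge> 0 \<Longrightarrow> 0 \<le> C t \<omega>"
  shows "0 \<le> payoff q X C \<omega>"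
  unfolding payoff_def using assms by (intro integral_nonneg_AE) (auto simp: indicator_def)

lemma payoff_eq_integral_ruin:
  assumes "ruin_set (controlled X C) \<omega> \<noteq> {}"
  shows "payoff q X C \<omega> =
    (\<integral>s. indicator {0..<Inf (ruin_set (controlled X C) \<omega>)} s * (exp (- q * s) * C s \<omega>) \<partial>lborel)"
  unfolding payoff_def ruin_time_eq_Inf[OF assms]
  by (rule Bochner_Integration.integral_cong) (auto simp: indicator_def)

lemma integrable_discounted_mono:
  fixes h :: "real \<Rightarrow> real"
  assumes h: "mono_on {0..} h" "\<And>t. t \<ge> 0 \<Longrightarrow> 0 \<le> h t \<and> h t \<le> B" and q: "0 \<le> q"
  shows "integrable lborel (\<lambda>s. indicator {0..<T} s * (exp (- q * s) * h s))"
proof (rule Bochner_Integration.integrable_bound)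
  define h' where "h' s = h (max 0 s)" for s
  have "mono h'" using h(1) unfolding h'_def mono_def mono_on_def by (simp add: max_def)
  then have [measurable]: "h' \<in> borel_measurable lborel" by (simp add: borel_measurable_mono)
  have "(\<lambda>s. indicator {0..<T} s * (exp (- q * s) * h' s)) \<in> borel_measurable lborel" by measurable
  then show "(\<lambda>s. indicator {0..<T} s * (exp (- q * s) * h s)) \<in> borel_measurable lborel"
    by (rule measurable_cong[THEN iffD1, rotated]) (auto simp: h'_def indicator_def)
  show "integrable lborel (\<lambda>s. B * indicator {0..<T} s :: real)"
    by (intro integrable_mult_right integrable_real_indicator emeasure_bounded_finite) auto
  show "AE s in lborel. norm (indicator {0..<T} s * (exp (- q * s) * h s)) \<le> norm (B * indicator {0..<T} s)"
  proof (rule AE_I2)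
    fix s :: real
    show "norm (indicator {0..<T} s * (exp (- q * s) * h s)) \<le> norm (B * indicator {0..<T} s)"
    proof (cases "s \<in> {0..<T}")
      case True
      then have "exp (- q * s) * h s \<le> 1 * B"
        using h(2)[of s] q by (intro mult_mono) auto
      then show ?thesis using True h(2)[of s] by simp
    qed simp
  qed
qed

lemma payoff_le:
  fixes X C :: "real \<Rightarrow> 'w \<Rightarrow> real"
  assumes X: "\<And>t. t \<ge> 0 \<Longrightarrow> X t \<omega> \<le> x + p * t"
    and C: "mono_on {0..} (\<lambda>t. C t \<omega>)" "\<And>t. t \<ge> 0 \<Longrightarrow> c \<le> C t \<omega>" "\<And>t. t \<ge> 0 \<Longrightarrow> C t \<omega> \<le> cbar"
    and c: "0 \<le> p" "p < c" and x: "0 \<le> x" and q: "0 \<le> q"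
  shows "payoff q X C \<omega> \<le> cbar * (x / (c - p))"
proof -
  note ruin = ruin_before_deadline[where X=X and C=C and \<omega>=\<omega>, OF X C(1,2) c(2) x]
  define T where "T = Inf (ruin_set (controlled X C) \<omega>)"
  have T: "0 \<le> T" "T \<le> x / (c - p)"
    using ruin Inf_ruin_set_nonneg[OF ruin(1)] by (auto simp: T_def)
  have "cbar \<ge> 0" using C(2,3)[of 0] c by linarith
  have "payoff q X C \<omega> = (\<integral>s. indicator {0..<T} s * (exp (- q * s) * C s \<omega>) \<partial>lborel)"
    unfolding T_def by (rule payoff_eq_integral_ruin[OF ruin(1)])
  also have "\<dots> \<le> (\<integral>s. cbar * indicator {0..<T} s \<partial>lborel)"
  proof (rule integral_le_nonneg_majorant)
    show "AE s in lborel. indicator {0..<T} s * (exp (- q * s) * C s \<omega>) \<le> cbar * indicator {0..<T} s"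
    proof (rule AE_I2)
      fix s :: real
      have "s \<in> {0..<T} \<Longrightarrow> exp (- q * s) * C s \<omega> \<le> 1 * cbar"
        using C(2,3)[of s] c q by (intro mult_mono) auto
      then show "indicator {0..<T} s * (exp (- q * s) * C s \<omega>) \<le> cbar * indicator {0..<T} s"
        by (simp add: indicator_def)
    qed
  qed (use \<open>cbar \<ge> 0\<close> in
      \<open>auto intro!: integrable_mult_right integrable_real_indicator emeasure_bounded_finite\<close>)
  also have "\<dots> \<le> cbar * (x / (c - p))"
    using T \<open>cbar \<ge> 0\<close> mult_left_mono[OF T(2) \<open>cbar \<ge> 0\<close>] by simp
  finally show ?thesis .
qed

lemma discounted_le_delay:
  fixes f g :: "real \<Rightarrow> real"
  assumes T: "T1 \<le> T2 + d" and fg: "\<And>s. 0 \<le> s \<Longrightarrow> 0 \<le> f s \<and> f s \<le> g s \<and> g s \<le> cbar"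
    and q: "0 \<le> q"
  shows "indicator {0..<T1} s * (exp (- q * s) * f s)
    \<le> indicator {0..<T2} s * (exp (- q * s) * g s) + cbar * indicator {T2..<T2 + d} s"
proof -
  have "0 \<le> cbar" using fg[of 0] by linarith
  consider "s \<notin> {0..<T1}" | "s \<in> {0..<T1}" "s < T2" | "s \<in> {0..<T1}" "T2 \<le> s" by force
  then show ?thesis
  proof cases
    case 1
    then show ?thesis using fg[of s] \<open>0 \<le> cbar\<close> by (auto simp: indicator_def)
  next
    case 2
    then show ?thesis using fg[of s] \<open>0 \<le> cbar\<close> by (auto simp: indicator_def)
  next
    case 3
    have "exp (- q * s) * f s \<le> 1 * cbar"
      using 3 fg[of s] q by (intro mult_mono) auto
    then show ?thesis using 3 T by (auto simp: indicator_def)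
  qed
qed

lemma payoff_le_delay:
  fixes X C D :: "real \<Rightarrow> 'w \<Rightarrow> real"
  assumes X: "\<And>t s. 0 \<le> t \<Longrightarrow> t \<le> s \<Longrightarrow> X s \<omega> \<le> X t \<omega> + p * (s - t)"
      "\<And>t. t \<ge> 0 \<Longrightarrow> X t \<omega> \<le> x + p * t"
    and C: "mono_on {0..} (\<lambda>t. C t \<omega>)" "\<And>t. t \<ge> 0 \<Longrightarrow> c1 \<le> C t \<omega>"
    and D: "mono_on {0..} (\<lambda>t. D t \<omega>)" "\<And>t. t \<ge> 0 \<Longrightarrow> c2 \<le> D t \<omega>"
      "\<And>t. t \<ge> 0 \<Longrightarrow> C t \<omega> \<le> D t \<omega>" "\<And>t. t \<ge> 0 \<Longrightarrow> D t \<omega> \<le> C t \<omega> + (c2 - c1)"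
      "\<And>t. t \<ge> 0 \<Longrightarrow> D t \<omega> \<le> cbar"
    and c: "0 \<le> p" "p < c1" "c1 \<le> c2" and x: "0 \<le> x" and q: "0 \<le> q"
  shows "payoff q X C \<omega> \<le> payoff q X D \<omega> + cbar * ((c2 - c1) * x / (c1 - p)^2)"
proof -
  note ruin1 = ruin_before_deadline[where X=X and C=C and \<omega>=\<omega>, OF X(2) C c(2) x]
  have "p < c2" using c by simp
  note ruin2 = ruin_before_deadline[where X=X and C=D and \<omega>=\<omega>, OF X(2) D(1,2) \<open>p < c2\<close> x]
  define T1 where "T1 = Inf (ruin_set (controlled X C) \<omega>)"
  define T2 where "T2 = Inf (ruin_set (controlled X D) \<omega>)"
  define d where "d = (c2 - c1) * x / (c1 - p)^2"
  have "0 \<le> d" "0 \<le> cbar" using c x D(2,5)[of 0] by (auto simp: d_def)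
  have T12: "T1 \<le> T2 + d"
    unfolding T1_def T2_def d_def using X C D(1,2,4) c(2,3) x by (rule Inf_ruin_set_le_add)
  have int2: "integrable lborel (\<lambda>s. indicator {0..<T2} s * (exp (- q * s) * D s \<omega>))"
    using D(1,2,5) c q by (intro integrable_discounted_mono[where B=cbar]) force+
  have int_delay: "integrable lborel (\<lambda>s. cbar * indicator {T2..<T2 + d} s :: real)"
    by (intro integrable_mult_right integrable_real_indicator emeasure_bounded_finite) auto
  have "payoff q X C \<omega> = (\<integral>s. indicator {0..<T1} s * (exp (- q * s) * C s \<omega>) \<partial>lborel)"
    unfolding T1_def by (rule payoff_eq_integral_ruin[OF ruin1(1)])
  also have "\<dots> \<le> (\<integral>s. indicator {0..<T2} s * (exp (- q * s) * D s \<omega>)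
      + cbar * indicator {T2..<T2 + d} s \<partial>lborel)"
  proof (rule integral_le_nonneg_majorant)
    show "integrable lborel (\<lambda>s. indicator {0..<T2} s * (exp (- q * s) * D s \<omega>)
      + cbar * indicator {T2..<T2 + d} s)"
      using int2 int_delay by (rule Bochner_Integration.integrable_add)
    show "AE s in lborel. indicator {0..<T1} s * (exp (- q * s) * C s \<omega>)
      \<le> indicator {0..<T2} s * (exp (- q * s) * D s \<omega>) + cbar * indicator {T2..<T2 + d} s"
      using T12 C(2) D(2,3,5) c q by (intro AE_I2 discounted_le_delay[where cbar=cbar]) force+
  qed (use \<open>0 \<le> cbar\<close> D(2) c in \<open>auto intro!: AE_I2 simp: indicator_def order_trans[OF _ D(2)]\<close>)
  also have "\<dots> = payoff q X D \<omega> + cbar * d"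
    using payoff_eq_integral_ruin[OF ruin2(1), of q] \<open>0 \<le> d\<close> int2 int_delay by (simp add: T2_def)
  finally show ?thesis by (simp add: d_def)
qed

section \<open>Measurability of the ruin time and of the payoff\<close>

lemma arrival_measurable[measurable]:
  assumes [measurable]: "\<And>i. E i \<in> borel_measurable M"
  shows "arrival E n \<in> borel_measurable M"
  unfolding arrival_def by measurable

lemma card_Collect_eq_sum:
  fixes P :: "nat \<Rightarrow> bool"
  assumes "\<And>n. P n \<Longrightarrow> n < m"
  shows "real (card {n. P n}) = (\<Sum>n<m. if P n then 1 else 0)"
proof -
  have "(\<Sum>n<m. if P n then 1 else 0) = (\<Sum>n\<in>{n\<in>{..<m}. P n}. 1 :: real)"
    by (rule sum.inter_filter[symmetric]) simp
  also have "{n\<in>{..<m}. P n} = {n. P n}" using assms by auto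
  finally show ?thesis by simp
qed

lemma measurable_card_Collect:
  fixes P :: "nat \<Rightarrow> 'w \<Rightarrow> bool"
  assumes [measurable]: "\<And>n. Measurable.pred M (P n)"
  shows "(\<lambda>\<omega>. card {n. P n \<omega>}) \<in> measurable M (count_space UNIV)"
proof (rule measurable_count_space_eq2_countable[THEN iffD2], safe)
  fix k :: nat
  have card_eq: "card {n. P n \<omega>} = k \<longleftrightarrow>
      (\<exists>m. (\<forall>n. P n \<omega> \<longrightarrow> n < m) \<and> (\<Sum>n<m. if P n \<omega> then 1 else 0) = real k)
      \<or> ((\<forall>m. \<exists>n\<ge>m. P n \<omega>) \<and> k = 0)" for \<omega>
  proof (cases "finite {n. P n \<omega>}")
    case True
    from finite_nat_bounded[OF True] obtain m where "{n. P n \<omega>} \<subseteq> {..<m}" ..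
    then have m: "\<forall>n. P n \<omega> \<longrightarrow> n < m" by auto
    then have "\<not> (\<forall>m. \<exists>n\<ge>m. P n \<omega>)" by (meson leD)
    moreover have "(\<Sum>n<m'. if P n \<omega> then 1 else 0) = real (card {n. P n \<omega>})"
      if "\<forall>n. P n \<omega> \<longrightarrow> n < m'" for m'
      using card_Collect_eq_sum[of "\<lambda>n. P n \<omega>" m'] that by simp
    ultimately show ?thesis using m by (auto simp del: of_nat_sum)
  next
    case False
    then have "\<not> (\<forall>n. P n \<omega> \<longrightarrow> n < m)" for m
      using finite_subset[of "{n. P n \<omega>}" "{..<m}"] by auto
    then show ?thesis using False by (auto simp: infinite_nat_iff_unbounded_le)
  qed
  have "(\<lambda>\<omega>. card {n. P n \<omega>}) -` {k} \<inter> space M = {\<omega>\<in>space M. card {n. P n \<omega>} = k}"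
    by auto
  also have "\<dots> = {\<omega>\<in>space M. (\<exists>m. (\<forall>n. P n \<omega> \<longrightarrow> n < m) \<and> (\<Sum>n<m. if P n \<omega> then 1 else 0) = real k)
        \<or> ((\<forall>m. \<exists>n\<ge>m. P n \<omega>) \<and> k = 0)}"
    by (simp only: card_eq)
  also have "\<dots> \<in> sets M" by measurable
  finally show "(\<lambda>\<omega>. card {n. P n \<omega>}) -` {k} \<inter> space M \<in> sets M" .
qed simp

lemma Ncount_measurable:
  assumes [measurable]: "\<And>i. E i \<in> borel_measurable M" "T \<in> borel_measurable M"
  shows "(\<lambda>\<omega>. Ncount E (T \<omega>) \<omega>) \<in> measurable M (count_space UNIV)"
  unfolding Ncount_def by (rule measurable_card_Collect) measurable

lemma surplus_measurable:
  assumes [measurable]: "\<And>i. E i \<in> borel_measurable M" "\<And>i. U i \<in> borel_measurable M"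
    "T \<in> borel_measurable M"
  shows "(\<lambda>\<omega>. surplus p E U x (T \<omega>) \<omega>) \<in> borel_measurable M"
proof -
  have "(\<lambda>\<omega>. (\<lambda>k \<omega>. \<Sum>i<k. U i \<omega>) (Ncount E (T \<omega>) \<omega>) \<omega>) \<in> borel_measurable M"
    by (rule measurable_compose_countable[OF _ Ncount_measurable]) auto
  then show ?thesis unfolding surplus_def by measurable
qed

lemma surplus_le_linear: "(\<And>i. 0 \<le> U i \<omega>) \<Longrightarrow> surplus p E U x t \<omega> \<le> x + p * t"
  unfolding surplus_def by (simp add: sum_nonneg)

(* Without finiteness, Ncount is the card of an infinite set, i.e. 0, and the surplus jumps up. *)
lemma surplus_increment_le:
  assumes U: "\<And>i. 0 \<le> U i \<omega>" and fin: "finite {n. arrival E n \<omega> \<le> s}" and ts: "t \<le> s"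
  shows "surplus p E U x s \<omega> \<le> surplus p E U x t \<omega> + p * (s - t)"
proof -
  have "Ncount E t \<omega> \<le> Ncount E s \<omega>"
    unfolding Ncount_def using fin ts by (intro card_mono) auto
  then have "(\<Sum>i<Ncount E t \<omega>. U i \<omega>) \<le> (\<Sum>i<Ncount E s \<omega>. U i \<omega>)"
    using U by (intro sum_mono2) auto
  then show ?thesis unfolding surplus_def by (simp add: algebra_simps)
qed

lemma controlled_surplus_eq:
  "controlled (surplus p E U x) D t \<omega>
    = x + p * t - (\<Sum>i<Ncount E t \<omega>. U i \<omega>) - integral {0..t} (\<lambda>s. D s \<omega>)"
  by (simp add: controlled_def surplus_def)

lemma controlled_neg_rational_after:
  fixes D :: "real \<Rightarrow> 'w \<Rightarrow> real"
  assumes U: "\<And>i. 0 \<le> U i \<omega>"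
    and D: "mono_on {0..} (\<lambda>s. D s \<omega>)" "\<And>s. s \<ge> 0 \<Longrightarrow> 0 \<le> D s \<omega>"
    and p: "0 < p" and inf: "infinite {n. arrival E n \<omega> \<le> t}"
    and t: "0 \<le> t" "t < a" and neg: "controlled (surplus p E U x) D t \<omega> < 0"
  shows "\<exists>r\<in>\<rat>. 0 \<le> r \<and> r < a \<and> controlled (surplus p E U x) D r \<omega> < 0"
proof -
  let ?Y = "controlled (surplus p E U x) D"
  have "t < t - ?Y t \<omega> / p" using neg p by (simp add: field_simps)
  then obtain r where r: "r \<in> \<rat>" "t < r" "r < min a (t - ?Y t \<omega> / p)"
    using Rats_dense_in_real[of t "min a (t - ?Y t \<omega> / p)"] t by auto
  have "Ncount E t \<omega> = 0" using inf by (simp add: Ncount_def)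
  have "?Y r \<omega> \<le> x + p * r - integral {0..r} (\<lambda>s. D s \<omega>)"
    using U by (simp add: controlled_surplus_eq sum_nonneg)
  also have "\<dots> \<le> x + p * r - integral {0..t} (\<lambda>s. D s \<omega>)"
    using integral_increment_ge[OF D(1) t(1), of r 0] r D(2) by simp
  also have "\<dots> = ?Y t \<omega> + p * (r - t)"
    using \<open>Ncount E t \<omega> = 0\<close> by (simp add: controlled_surplus_eq algebra_simps)
  also have "\<dots> < 0" using r p by (simp add: field_simps)
  finally have "?Y r \<omega> < 0" .
  moreover have "0 \<le> r" using r t by linarith
  ultimately show ?thesis using r by auto
qed

lemma controlled_neg_rational_before:
  fixes D :: "real \<Rightarrow> 'w \<Rightarrow> real"
  assumes D: "mono_on {0..} (\<lambda>s. D s \<omega>)" "\<And>s. s \<ge> 0 \<Longrightarrow> D s \<omega> \<le> cb"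
    and cb: "0 < cb" and p: "0 \<le> p" and fin: "finite {n. arrival E n \<omega> \<le> t}"
    and not_arrival: "\<And>n. arrival E n \<omega> \<noteq> t" and t: "0 < t"
    and neg: "controlled (surplus p E U x) D t \<omega> < 0"
  shows "\<exists>r\<in>\<rat>. 0 \<le> r \<and> r < t \<and> controlled (surplus p E U x) D r \<omega> < 0"
proof -
  let ?Y = "controlled (surplus p E U x) D"
  define A where "A = insert 0 ((\<lambda>n. arrival E n \<omega>) ` {n. arrival E n \<omega> \<le> t})"
  have "finite A" using fin by (simp add: A_def)
  have "Max A < t" using \<open>finite A\<close> t not_arrival
    by (subst Max_less_iff) (auto simp: A_def order_le_less)
  have "t + ?Y t \<omega> / cb < t" using neg cb by (simp add: field_simps)
  then obtain r where r: "r \<in> \<rat>" "max (Max A) (t + ?Y t \<omega> / cb) < r" "r < t"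
    using Rats_dense_in_real[of "max (Max A) (t + ?Y t \<omega> / cb)" t] \<open>Max A < t\<close> by auto
  have "0 \<le> Max A" using \<open>finite A\<close> by (simp add: A_def)
  then have "0 \<le> r" using r by simp
  have "arrival E n \<omega> \<le> Max A" if "arrival E n \<omega> \<le> t" for n
    using \<open>finite A\<close> that by (auto simp: A_def)
  then have "{n. arrival E n \<omega> \<le> r} = {n. arrival E n \<omega> \<le> t}"
    using r by fastforce
  then have "Ncount E r \<omega> = Ncount E t \<omega>" by (simp add: Ncount_def)
  then have "?Y r \<omega> = ?Y t \<omega> - p * (t - r)
      + (integral {0..t} (\<lambda>s. D s \<omega>) - integral {0..r} (\<lambda>s. D s \<omega>))"
    by (simp add: controlled_surplus_eq algebra_simps)
  also have "\<dots> \<le> ?Y t \<omega> + cb * (t - r)"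
  proof -
    have "0 \<le> p * (t - r)" using r p by simp
    then show ?thesis using integral_increment_le[OF D(1) \<open>0 \<le> r\<close> _ D(2), of t] r by linarith
  qed
  also have "\<dots> < 0" using r cb by (simp add: field_simps)
  finally show ?thesis using r \<open>0 \<le> r\<close> by auto
qed

(* Between arrivals the controlled surplus is continuous, so a negative value at t is
   seen at a nearby rational: after the last arrival before t, or just after t when
   infinitely many arrivals precede t (then Ncount is 0 and no claims are subtracted). *)
lemma ruin_free_before_iff_countable:
  fixes D :: "real \<Rightarrow> 'w \<Rightarrow> real"
  assumes U: "\<And>i. 0 \<le> U i \<omega>"
    and D: "mono_on {0..} (\<lambda>s. D s \<omega>)" "\<And>s. s \<ge> 0 \<Longrightarrow> 0 \<le> D s \<omega> \<and> D s \<omega> \<le> cb"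
    and p: "0 < p" and cb: "0 < cb"
  shows "(\<forall>t. 0 \<le> t \<and> t < a \<longrightarrow> 0 \<le> controlled (surplus p E U x) D t \<omega>) \<longleftrightarrow>
     (\<forall>r\<in>\<rat>. 0 \<le> r \<and> r < a \<longrightarrow> 0 \<le> controlled (surplus p E U x) D r \<omega>) \<and>
     (\<forall>n. 0 \<le> arrival E n \<omega> \<and> arrival E n \<omega> < a
        \<longrightarrow> 0 \<le> controlled (surplus p E U x) D (arrival E n \<omega>) \<omega>)"
    (is "?L \<longleftrightarrow> ?R")
proof
  assume ?R
  show ?L
  proof (intro allI impI)
    fix t assume t: "0 \<le> t \<and> t < a"
    show "0 \<le> controlled (surplus p E U x) D t \<omega>"
    proof (rule ccontr)
      assume "\<not> ?thesis"
      then have neg: "controlled (surplus p E U x) D t \<omega> < 0" by simp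
      have "t \<notin> \<rat>" using \<open>?R\<close> t neg by auto
      then have "0 < t" using t by (metis Rats_0 order_le_less)
      have not_arrival: "arrival E n \<omega> \<noteq> t" for n using \<open>?R\<close> t neg by auto
      show False
      proof (cases "finite {n. arrival E n \<omega> \<le> t}")
        case True
        then show False
          using controlled_neg_rational_before[OF D(1) _ cb _ True not_arrival \<open>0 < t\<close> neg] D(2) p \<open>?R\<close> t
          by fastforce
      next
        case False
        then show False
          using controlled_neg_rational_after[OF U D(1) _ p False _ _ neg] D(2) \<open>?R\<close> t by fastforce
      qed
    qed
  qed
qed auto

context
  fixes M :: "'w measure" and E U :: "nat \<Rightarrow> 'w \<Rightarrow> real" and D :: "real \<Rightarrow> 'w \<Rightarrow> real"
    and H :: "'w \<Rightarrow> real \<Rightarrow> real" and p x q cb :: real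
  assumes EU_measurable[measurable]: "\<And>i. E i \<in> borel_measurable M" "\<And>i. U i \<in> borel_measurable M"
    and U_nonneg: "\<And>i \<omega>. \<omega> \<in> space M \<Longrightarrow> 0 \<le> U i \<omega>"
    and D_mono: "\<And>\<omega>. \<omega> \<in> space M \<Longrightarrow> mono_on {0..} (\<lambda>s. D s \<omega>)"
    and D_bounds: "\<And>\<omega> s. \<omega> \<in> space M \<Longrightarrow> s \<ge> 0 \<Longrightarrow> 0 \<le> D s \<omega> \<and> D s \<omega> \<le> cb"
    and H_measurable[measurable]: "(\<lambda>(\<omega>, s). H \<omega> s) \<in> borel_measurable (M \<Otimes>\<^sub>M lborel)"
    and D_eq_H: "\<And>\<omega> s. \<omega> \<in> space M \<Longrightarrow> s \<ge> 0 \<Longrightarrow> D s \<omega> = H \<omega> s"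
    and p: "0 < p" and cb: "0 < cb"
begin

lemma integral_control_eq_lebesgue:
  assumes \<omega>: "\<omega> \<in> space M"
  shows "integral {0..T} (\<lambda>s. D s \<omega>) = (\<integral>s. indicator {0..T} s * H \<omega> s \<partial>lborel)"
proof (cases "0 \<le> T")
  case False
  then show ?thesis by (simp add: indicator_def)
next
  case True
  have [measurable]: "H \<omega> \<in> borel_measurable lborel"
    using measurable_Pair2[OF H_measurable \<omega>] by simp
  have D_on: "indicator {0..T} s *\<^sub>R D s \<omega> = indicator {0..T} s * H \<omega> s" for s
    using D_eq_H[OF \<omega>] by (auto simp: indicator_def)
  have "set_integrable lborel {0..T} (\<lambda>s. D s \<omega>)"
    unfolding set_integrable_def
  proof (rule Bochner_Integration.integrable_bound)
    show "integrable lborel (\<lambda>s. cb * indicator {0..T} s :: real)"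
      by (intro integrable_mult_right integrable_real_indicator emeasure_bounded_finite) auto
    show "(\<lambda>s. indicator {0..T} s *\<^sub>R D s \<omega>) \<in> borel_measurable lborel"
      unfolding D_on by simp
    show "AE s in lborel. norm (indicator {0..T} s *\<^sub>R D s \<omega>) \<le> norm (cb * indicator {0..T} s)"
      using D_bounds[OF \<omega>] cb by (auto simp: indicator_def)
  qed
  then have "integral {0..T} (\<lambda>s. D s \<omega>) = (LINT s:{0..T}|lborel. D s \<omega>)"
    by (rule set_borel_integral_eq_integral(2)[symmetric])
  also have "\<dots> = (\<integral>s. indicator {0..T} s * H \<omega> s \<partial>lborel)"
    unfolding set_lebesgue_integral_def D_on ..
  finally show ?thesis .
qed

lemma measurable_integral_control[measurable]:
  assumes [measurable]: "T \<in> borel_measurable M"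
  shows "(\<lambda>\<omega>. integral {0..T \<omega>} (\<lambda>s. D s \<omega>)) \<in> borel_measurable M"
proof -
  have "(\<lambda>\<omega>. \<integral>s. indicator {0..T \<omega>} s * H \<omega> s \<partial>lborel) \<in> borel_measurable M"
  proof (rule lborel.borel_measurable_lebesgue_integral)
    have "(\<lambda>(\<omega>, s). (if 0 \<le> s \<and> s \<le> T \<omega> then 1 else 0) * H \<omega> s :: real)
        \<in> borel_measurable (M \<Otimes>\<^sub>M lborel)" by measurable
    then show "(\<lambda>(\<omega>, s). indicator {0..T \<omega>} s * H \<omega> s) \<in> borel_measurable (M \<Otimes>\<^sub>M lborel)"
      by (simp add: indicator_def case_prod_beta')
  qed
  then show ?thesis
    by (rule measurable_cong[THEN iffD1, rotated]) (simp add: integral_control_eq_lebesgue)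
qed

lemma measurable_controlled_at[measurable]:
  assumes [measurable]: "T \<in> borel_measurable M"
  shows "(\<lambda>\<omega>. controlled (surplus p E U x) D (T \<omega>) \<omega>) \<in> borel_measurable M"
proof -
  have [measurable]: "(\<lambda>\<omega>. surplus p E U x (T \<omega>) \<omega>) \<in> borel_measurable M"
    by (rule surplus_measurable) measurable
  show ?thesis unfolding controlled_def by measurable
qed

lemma measurable_ruin_time:
  "ruin_time (controlled (surplus p E U x) D) \<in> borel_measurable M"
proof (rule borel_measurableI_ge)
  let ?Y = "controlled (surplus p E U x) D"
  have ge: "{\<omega>\<in>space M. ereal a \<le> ruin_time ?Y \<omega>} \<in> sets M" for a
  proof -
    have "ereal a \<le> ruin_time ?Y \<omega> \<longleftrightarrow>
        (\<forall>k::rat. 0 \<le> real_of_rat k \<and> real_of_rat k < a \<longrightarrow> 0 \<le> ?Y (real_of_rat k) \<omega>) \<and>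
        (\<forall>n. 0 \<le> arrival E n \<omega> \<and> arrival E n \<omega> < a \<longrightarrow> 0 \<le> ?Y (arrival E n \<omega>) \<omega>)"
      if "\<omega> \<in> space M" for \<omega>
      unfolding ereal_le_ruin_time_iff
      using ruin_free_before_iff_countable[where U=U and D=D and \<omega>=\<omega>, OF U_nonneg[OF that] D_mono[OF that] D_bounds[OF that] p cb]
      by (simp add: Rats_def)
    then have "{\<omega>\<in>space M. ereal a \<le> ruin_time ?Y \<omega>} =
      {\<omega>\<in>space M. (\<forall>k::rat. 0 \<le> real_of_rat k \<and> real_of_rat k < a \<longrightarrow> 0 \<le> ?Y (real_of_rat k) \<omega>) \<and>
        (\<forall>n. 0 \<le> arrival E n \<omega> \<and> arrival E n \<omega> < a \<longrightarrow> 0 \<le> ?Y (arrival E n \<omega>) \<omega>)}"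
      by (intro Collect_cong conj_cong refl)
    also have "\<dots> \<in> sets M" by measurable
    finally show ?thesis .
  qed
  fix y :: ereal
  show "{\<omega>\<in>space M. y \<le> ruin_time ?Y \<omega>} \<in> sets M"
  proof (cases y)
    case PInf
    have infty_le: "\<infinity> \<le> z \<longleftrightarrow> (\<forall>k::nat. ereal (real k) \<le> z)" for z :: ereal
      by (cases z) (auto, meson not_le reals_Archimedean2)
    have "{\<omega>\<in>space M. y \<le> ruin_time ?Y \<omega>} = (\<Inter>k::nat. {\<omega>\<in>space M. ereal (real k) \<le> ruin_time ?Y \<omega>})"
      unfolding PInf infty_le by blast
    also have "\<dots> \<in> sets M" using ge by auto
    finally show ?thesis .
  qed (use ge in auto)
qed

lemma measurable_payoff:
  "payoff q (surplus p E U x) D \<in> borel_measurable M"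
proof -
  let ?Y = "controlled (surplus p E U x) D"
  have [measurable]: "ruin_time ?Y \<in> borel_measurable M" by (rule measurable_ruin_time)
  have "(\<lambda>\<omega>. \<integral>s. (if 0 \<le> s \<and> ereal s < ruin_time ?Y \<omega> then 1 else 0) * (exp (- q * s) * H \<omega> s) \<partial>lborel)
      \<in> borel_measurable M"
    by (rule lborel.borel_measurable_lebesgue_integral) measurable
  then show ?thesis
  proof (rule measurable_cong[THEN iffD1, rotated])
    fix \<omega> assume \<omega>: "\<omega> \<in> space M"
    show "(\<integral>s. (if 0 \<le> s \<and> ereal s < ruin_time ?Y \<omega> then 1 else 0) * (exp (- q * s) * H \<omega> s) \<partial>lborel)
        = payoff q (surplus p E U x) D \<omega>"
      unfolding payoff_def
      by (rule Bochner_Integration.integral_cong) (use D_eq_H[OF \<omega>] in \<open>auto simp: indicator_def\<close>)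
  qed
qed

end

section \<open>Local finiteness of the arrival times\<close>

lemma arrival_mono:
  assumes "\<And>i. 0 \<le> E i \<omega>" "n \<le> m"
  shows "arrival E n \<omega> \<le> arrival E m \<omega>"
  unfolding arrival_def using assms by (intro sum_mono2) auto

lemma (in prob_space) AE_exponential_nonneg:
  assumes "distributed M lborel X (exponential_density l)"
  shows "AE \<omega> in M. 0 \<le> X \<omega>"
  by (subst distributed_AE2[OF assms]) (auto simp: exponential_density_def)

lemma (in prob_space) expectation_exp_neg_exponential_le:
  assumes X: "distributed M lborel X (exponential_density l)" and l: "0 < l"
  shows "expectation (\<lambda>\<omega>. exp (- max (X \<omega>) 0)) \<le> 1 - (1 - exp (-1)) * exp (- l)"
proof -
  have [measurable]: "X \<in> borel_measurable M" using distributed_measurable[OF X] by simp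
  let ?big = "{\<omega>\<in>space M. 1 < X \<omega>}"
  have int_big: "integrable M (\<lambda>\<omega>. (1 - exp (-1)) * indicator ?big \<omega> :: real)"
    by (intro integrable_mult_right integrable_real_indicator) (auto simp: emeasure_eq_measure)
  have "expectation (\<lambda>\<omega>. exp (- max (X \<omega>) 0))
      \<le> expectation (\<lambda>\<omega>. 1 - (1 - exp (-1)) * indicator ?big \<omega>)"
  proof (rule integral_mono)
    show "integrable M (\<lambda>\<omega>. exp (- max (X \<omega>) 0))"
      by (rule integrable_const_bound[where B=1]) auto
    show "integrable M (\<lambda>\<omega>. 1 - (1 - exp (-1)) * indicator ?big \<omega> :: real)"
      using Bochner_Integration.integrable_diff[OF integrable_const int_big] by simp
    show "exp (- max (X \<omega>) 0) \<le> 1 - (1 - exp (-1)) * (indicator ?big \<omega> :: real)" if "\<omega> \<in> space M" for \<omega>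
      using that by (cases "1 < X \<omega>") (auto simp: indicator_def)
  qed
  also have "\<dots> = 1 - (1 - exp (-1)) * prob ?big"
    using Bochner_Integration.integral_diff[OF integrable_const int_big] by (simp add: prob_space)
  also have "prob ?big = exp (- l)"
    using exponential_distributedD_gt[OF X _ l, of 1] by simp
  finally show ?thesis .
qed

lemma (in prob_space) expectation_prod_exp_neg_le:
  assumes dist: "\<And>n. distributed M lborel (E n) (exponential_density l)" and l: "0 < l"
    and ind: "indep_vars (\<lambda>_. borel) (\<lambda>i. case i of Inl n \<Rightarrow> E n | Inr n \<Rightarrow> U n) UNIV"
  shows "expectation (\<lambda>\<omega>. \<Prod>j\<le>n. exp (- max (E j \<omega>) 0)) \<le> (1 - (1 - exp (-1)) * exp (- l)) ^ Suc n"
proof -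
  define X where "X = (\<lambda>i. case i of Inl n \<Rightarrow> E n | Inr n \<Rightarrow> U n)"
  define Z where "Z i \<omega> = exp (- max (X i \<omega>) 0)" for i \<omega>
  have Z_E: "Z (Inl j) = (\<lambda>\<omega>. exp (- max (E j \<omega>) 0))" for j by (auto simp: Z_def X_def)
  have [measurable]: "E j \<in> borel_measurable M" for j
    using distributed_measurable[OF dist] by simp
  have int_Z: "integrable M (Z (Inl j))" for j
    unfolding Z_E by (rule integrable_const_bound[where B=1]) auto
  have "indep_vars (\<lambda>_. borel) X (Inl ` {..n})"
    using indep_vars_subset[OF ind[folded X_def]] by auto
  then have ind_Z: "indep_vars (\<lambda>_. borel) Z (Inl ` {..n})"
    unfolding Z_def by (rule indep_vars_compose2[where X=X]) measurable
  have "expectation (\<lambda>\<omega>. \<Prod>j\<le>n. exp (- max (E j \<omega>) 0)) = expectation (\<lambda>\<omega>. \<Prod>i\<in>Inl ` {..n}. Z i \<omega>)"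
    by (simp add: prod.reindex Z_E)
  also have "\<dots> = (\<Prod>i\<in>Inl ` {..n}. expectation (Z i))"
    by (rule indep_vars_lebesgue_integral[OF _ ind_Z]) (auto intro: int_Z)
  also have "\<dots> = (\<Prod>j\<le>n. expectation (\<lambda>\<omega>. exp (- max (E j \<omega>) 0)))"
    by (simp add: prod.reindex Z_E)
  also have "\<dots> \<le> (\<Prod>j\<le>n. 1 - (1 - exp (-1)) * exp (- l))"
    by (intro prod_mono conjI integral_nonneg_AE AE_I2 expectation_exp_neg_exponential_le[OF dist l])
      auto
  finally show ?thesis by simp
qed

(* Markov's inequality for exp(-S_n): by independence E exp(-S_n) <= rho^(n+1) with rho < 1,
   so P(S_n <= b) <= e^b rho^(n+1) tends to 0. *)
lemma (in prob_space) AE_arrival_exceeds: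
  assumes dist: "\<And>n. distributed M lborel (E n) (exponential_density l)" and l: "0 < l"
    and ind: "indep_vars (\<lambda>_. borel) (\<lambda>i. case i of Inl n \<Rightarrow> E n | Inr n \<Rightarrow> U n) UNIV"
  shows "AE \<omega> in M. \<exists>n. b < arrival E n \<omega>"
proof -
  define \<rho> where "\<rho> = 1 - (1 - exp (-1)) * exp (- l)"
  have "0 < (1 - exp (-1::real)) * exp (- l)" by simp
  moreover have "(1 - exp (-1::real)) * exp (- l) \<le> 1 * 1" using l by (intro mult_mono) auto
  ultimately have \<rho>: "0 \<le> \<rho>" "\<rho> < 1" by (auto simp: \<rho>_def)
  define P where "P n \<omega> = (\<Prod>j\<le>n. exp (- max (E j \<omega>) 0))" for n \<omega>
  have [measurable]: "E j \<in> borel_measurable M" for j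
    using distributed_measurable[OF dist] by simp
  have [measurable]: "P n \<in> borel_measurable M" for n unfolding P_def by measurable
  have P_bounds: "0 \<le> P n \<omega>" "P n \<omega> \<le> 1" for n \<omega>
    unfolding P_def by (auto intro: prod_nonneg prod_le_1)
  define B where "B = {\<omega>\<in>space M. \<forall>n. exp (- b) \<le> P n \<omega>}"
  have [measurable]: "B \<in> sets M" unfolding B_def by measurable
  have bound: "prob B \<le> exp b * \<rho> ^ Suc n" for n
  proof -
    have "prob B \<le> prob {\<omega>\<in>space M. exp (- b) \<le> P n \<omega>}"
      by (rule finite_measure_mono) (auto simp: B_def)
    also have "\<dots> \<le> expectation (P n) / exp (- b)"
      by (rule integral_Markov_inequality_measure[where A="space M"])
        (use P_bounds in \<open>auto intro!: integrable_const_bound[where B=1] AE_I2\<close>)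
    also have "\<dots> \<le> \<rho> ^ Suc n / exp (- b)"
      using expectation_prod_exp_neg_le[OF dist l ind, of n]
      by (intro divide_right_mono) (simp_all add: P_def[abs_def] \<rho>_def)
    finally show ?thesis by (simp add: exp_minus field_simps)
  qed
  have lim: "(\<lambda>n. exp b * \<rho> ^ Suc n) \<longlonglongrightarrow> 0"
    using \<rho> by (intro tendsto_mult_right_zero LIMSEQ_Suc LIMSEQ_power_zero) auto
  have "prob B \<le> 0" using bound by (intro LIMSEQ_le_const[OF lim]) auto
  then have "AE \<omega> in M. \<omega> \<notin> B"
    using measure_nonneg[of M B] by (intro AE_not_in) (simp add: null_sets_def emeasure_eq_measure)
  moreover have "AE \<omega> in M. \<forall>j. 0 \<le> E j \<omega>"
    using AE_exponential_nonneg[OF dist] by (simp add: AE_all_countable)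
  ultimately show ?thesis using AE_space
  proof eventually_elim
    case (elim \<omega>)
    have "P n \<omega> = exp (- arrival E n \<omega>)" for n
      using elim by (simp add: P_def arrival_def exp_sum[symmetric] sum_negf)
    then show ?case using elim by (auto simp: B_def not_le)
  qed
qed

lemma (in prob_space) AE_arrivals_locally_finite:
  assumes dist: "\<And>n. distributed M lborel (E n) (exponential_density l)" and l: "0 < l"
    and ind: "indep_vars (\<lambda>_. borel) (\<lambda>i. case i of Inl n \<Rightarrow> E n | Inr n \<Rightarrow> U n) UNIV"
  shows "AE \<omega> in M. \<forall>t. finite {n. arrival E n \<omega> \<le> t}"
proof -
  have "AE \<omega> in M. \<forall>k::nat. \<exists>n. real k < arrival E n \<omega>"
    using AE_arrival_exceeds[OF dist l ind] by (simp add: AE_all_countable)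
  moreover have "AE \<omega> in M. \<forall>j. 0 \<le> E j \<omega>"
    using AE_exponential_nonneg[OF dist] by (simp add: AE_all_countable)
  ultimately show ?thesis
  proof eventually_elim
  case (elim \<omega>)
  show ?case
  proof
    fix t :: real
    obtain k :: nat where "t \<le> real k" using real_arch_simple by blast
    obtain m where "real k < arrival E m \<omega>" using elim by blast
    then have "{n. arrival E n \<omega> \<le> t} \<subseteq> {..<m}"
      using \<open>t \<le> real k\<close> arrival_mono[of E \<omega> m] elim by (force simp: not_less[symmetric])
    then show "finite {n. arrival E n \<omega> \<le> t}" by (rule finite_subset) simp
  qed
  qed
qed

section \<open>Admissible controls and their measurable versions\<close>

lemma sigma_algebra_nat_filtration: "sigma_algebra (space M) (nat_filtration M Y t)"
  unfolding nat_filtration_def by (rule sigma_algebra_sigma_sets) auto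

lemma null_set_in_nat_filtration: "N \<in> null_sets M \<Longrightarrow> N \<in> nat_filtration M Y t"
  unfolding nat_filtration_def using null_sets.sets_into_space by (intro sigma_sets.Basic) blast

lemma nat_filtration_subset_completion:
  assumes "\<And>s. Y s \<in> borel_measurable M"
  shows "nat_filtration M Y t \<subseteq> sets (completion M)"
proof -
  have "sigma_sets (space (completion M)) ({Y s -` A \<inter> space M | s A. 0 \<le> s \<and> s \<le> t \<and> A \<in> sets borel}
      \<union> {N. N \<subseteq> space M \<and> (\<exists>A\<in>null_sets M. N \<subseteq> A)}) \<subseteq> sets (completion M)"
  proof (rule sets.sigma_sets_subset, safe)
    show "Y s -` A \<inter> space M \<in> sets (completion M)" if "A \<in> sets borel" for s A
      using measurable_sets[OF assms that] by simp
    show "N \<in> sets (completion M)" if "A \<in> null_sets M" "N \<subseteq> A" for N A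
      using that by (rule sets_completionI_sub)
  qed
  then show ?thesis by (simp add: nat_filtration_def)
qed

lemma adapted_measurable_completion:
  assumes "\<And>s. Y s \<in> borel_measurable M" "adapted_to M (nat_filtration M Y) C" "0 \<le> t"
  shows "C t \<in> borel_measurable (completion M)"
proof (rule measurableI)
  fix A :: "real set" assume "A \<in> sets borel"
  then have "C t -` A \<inter> space M \<in> nat_filtration M Y t"
    using assms(2,3) unfolding adapted_to_def by blast
  then show "C t -` A \<inter> space (completion M) \<in> sets (completion M)"
    using nat_filtration_subset_completion[of Y, OF assms(1)] by auto
qed simp

lemma admissible_const:
  assumes "c \<le> cbar"
  shows "admissible M (nat_filtration M Y) c cbar (\<lambda>t \<omega>. c)"
proof -
  interpret F: sigma_algebra "space M" "nat_filtration M Y t" for t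
    by (rule sigma_algebra_nat_filtration)
  have "(\<lambda>\<omega>. c) -` A \<inter> space M \<in> nat_filtration M Y t" for A t
    by (cases "c \<in> A") auto
  then show ?thesis using assms
    by (auto simp: admissible_def adapted_to_def mono_on_def intro: continuous_const)
qed

(* Z is a null set off which C agrees with a Borel version at all rational times; setting
   the control to c on Z keeps it adapted, since the filtration is complete. *)
definition raise_floor :: "'w set \<Rightarrow> real \<Rightarrow> (real \<Rightarrow> 'w \<Rightarrow> real) \<Rightarrow> real \<Rightarrow> 'w \<Rightarrow> real" where
  "raise_floor Z c C t \<omega> = (if \<omega> \<in> Z then c else max (C t \<omega>) c)"

lemma adapted_raise_floor:
  assumes C: "adapted_to M (nat_filtration M Y) C" and Z: "Z \<in> null_sets M"
  shows "adapted_to M (nat_filtration M Y) (raise_floor Z c C)"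
  unfolding adapted_to_def
proof (intro allI impI ballI)
  fix t :: real and A :: "real set" assume t: "0 \<le> t" and A: "A \<in> sets borel"
  interpret F: sigma_algebra "space M" "nat_filtration M Y t"
    by (rule sigma_algebra_nat_filtration)
  define B where "B = (\<lambda>y. max y c) -` A"
  have "B \<in> sets borel"
    using measurable_sets[of "\<lambda>y. max y c" borel borel A] A by (simp add: B_def)
  then have "C t -` B \<inter> space M \<in> nat_filtration M Y t"
    using C t unfolding adapted_to_def by blast
  moreover have "Z \<in> nat_filtration M Y t" "space M - Z \<in> nat_filtration M Y t"
    using null_set_in_nat_filtration[OF Z] by auto
  moreover have "raise_floor Z c C t -` A \<inter> space M
      = (if c \<in> A then Z else {}) \<union> ((space M - Z) \<inter> (C t -` B \<inter> space M))"
    using null_sets.sets_into_space[OF Z] by (auto simp: raise_floor_def B_def split: if_splits)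
  ultimately show "raise_floor Z c C t -` A \<inter> space M \<in> nat_filtration M Y t"
    by auto
qed

lemma admissible_raise_floor:
  assumes C: "admissible M (nat_filtration M Y) c1 cbar C" and Z: "Z \<in> null_sets M"
    and c: "c1 \<le> c2" "c2 \<le> cbar"
  shows "admissible M (nat_filtration M Y) c2 cbar (raise_floor Z c2 C)"
  unfolding admissible_def
proof (intro conjI ballI)
  show "adapted_to M (nat_filtration M Y) (raise_floor Z c2 C)"
    using C Z by (intro adapted_raise_floor) (auto simp: admissible_def)
  fix \<omega> assume \<omega>: "\<omega> \<in> space M"
  have C\<omega>: "\<forall>t\<ge>0. c1 \<le> C t \<omega> \<and> C t \<omega> \<le> cbar" "mono_on {0..} (\<lambda>t. C t \<omega>)"
    "\<forall>t\<ge>0. continuous (at_right t) (\<lambda>s. C s \<omega>)"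
    "\<forall>t>0. \<exists>l. ((\<lambda>s. C s \<omega>) \<longlongrightarrow> l) (at_left t)"
    using C \<omega> by (auto simp: admissible_def)
  show "\<forall>t\<ge>0. c2 \<le> raise_floor Z c2 C t \<omega> \<and> raise_floor Z c2 C t \<omega> \<le> cbar"
    using C\<omega>(1) c by (auto simp: raise_floor_def)
  show "mono_on {0..} (\<lambda>t. raise_floor Z c2 C t \<omega>)"
  proof (rule mono_onI)
    fix r s :: real assume "r \<in> {0..}" "s \<in> {0..}" "r \<le> s"
    then have "C r \<omega> \<le> C s \<omega>" by (rule mono_onD[OF C\<omega>(2)])
    then show "raise_floor Z c2 C r \<omega> \<le> raise_floor Z c2 C s \<omega>"
      by (auto simp: raise_floor_def max_def)
  qed
  show "\<forall>t\<ge>0. continuous (at_right t) (\<lambda>s. raise_floor Z c2 C s \<omega>)"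
    using C\<omega>(3) by (cases "\<omega> \<in> Z") (auto simp: raise_floor_def intro: continuous_max)
  show "\<forall>t>0. \<exists>l. ((\<lambda>s. raise_floor Z c2 C s \<omega>) \<longlongrightarrow> l) (at_left t)"
  proof (intro allI impI)
    fix t :: real assume "0 < t"
    then obtain l where "((\<lambda>s. C s \<omega>) \<longlongrightarrow> l) (at_left t)" using C\<omega>(4) by blast
    then have "((\<lambda>s. raise_floor Z c2 C s \<omega>) \<longlongrightarrow> (if \<omega> \<in> Z then c2 else max l c2)) (at_left t)"
      by (auto simp: raise_floor_def intro: tendsto_max)
    then show "\<exists>l. ((\<lambda>s. raise_floor Z c2 C s \<omega>) \<longlongrightarrow> l) (at_left t)" ..
  qed
qed

definition rat_above :: "nat \<Rightarrow> real \<Rightarrow> real" where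
  "rat_above n s = (of_int \<lfloor>real (Suc n) * s\<rfloor> + 1) / real (Suc n)"

lemma rat_above_Rats: "rat_above n s \<in> \<rat>"
  unfolding rat_above_def by (intro Rats_divide Rats_add Rats_of_int Rats_of_nat Rats_1)

lemma rat_above_gt: "s < rat_above n s"
proof -
  have "real (Suc n) * s < of_int \<lfloor>real (Suc n) * s\<rfloor> + 1" by linarith
  then show ?thesis unfolding rat_above_def by (simp add: field_simps)
qed

lemma rat_above_le: "rat_above n s \<le> s + inverse (real (Suc n))"
proof -
  have "rat_above n s \<le> (real (Suc n) * s + 1) / real (Suc n)"
    unfolding rat_above_def by (rule divide_right_mono) linarith+
  also have "\<dots> = s + inverse (real (Suc n))" by (simp add: field_simps)
  finally show ?thesis .
qed

lemma filterlim_rat_above: "filterlim (\<lambda>n. rat_above n s) (at_right s) sequentially"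
proof (subst filterlim_at, intro conjI)
  show "\<forall>\<^sub>F n in sequentially. rat_above n s \<in> {s<..} \<and> rat_above n s \<noteq> s"
    using rat_above_gt[of s] by (intro always_eventually allI) (simp add: less_imp_neq[symmetric])
  show "(\<lambda>n. rat_above n s) \<longlonglongrightarrow> s"
    by (rule tendsto_sandwich[OF _ _ tendsto_const LIMSEQ_inverse_real_of_nat_add])
      (intro always_eventually allI less_imp_le rat_above_gt rat_above_le)+
qed

lemma measurable_rat_above[measurable]:
  assumes [measurable]: "\<And>r. G r \<in> borel_measurable M"
  shows "(\<lambda>z. G (rat_above n (snd z)) (fst z)) \<in> borel_measurable (M \<Otimes>\<^sub>M lborel)"
proof -
  have "(\<lambda>z. (\<lambda>k z. G ((of_int k + 1) / real (Suc n)) (fst z)) \<lfloor>real (Suc n) * snd z\<rfloor> z)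
      \<in> borel_measurable (M \<Otimes>\<^sub>M lborel)"
    by (rule measurable_compose_countable) measurable
  then show ?thesis by (simp add: rat_above_def)
qed

lemma right_continuous_measurable_version:
  fixes C :: "real \<Rightarrow> 'w \<Rightarrow> real"
  assumes meas: "\<And>r. 0 \<le> r \<Longrightarrow> C r \<in> borel_measurable (completion M)"
    and right_cont: "\<And>\<omega> s. \<omega> \<in> space M \<Longrightarrow> 0 \<le> s \<Longrightarrow> continuous (at_right s) (\<lambda>u. C u \<omega>)"
  obtains Z G where "Z \<in> null_sets M" "\<And>r. G r \<in> borel_measurable M"
    "\<And>\<omega> s. \<omega> \<in> space M \<Longrightarrow> \<omega> \<notin> Z \<Longrightarrow> 0 \<le> s \<Longrightarrow> (\<lambda>n. G (rat_above n s) \<omega>) \<longlonglongrightarrow> C s \<omega>"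
proof -
  have "\<exists>g. g \<in> borel_measurable M \<and> (0 \<le> r \<longrightarrow> (AE \<omega> in M. C r \<omega> = g \<omega>))" for r
  proof (cases "0 \<le> r")
    case True
    then show ?thesis using completion_ex_borel_measurable_real[OF meas[OF True]] by blast
  qed (intro exI[of _ "\<lambda>_. 0"], simp)
  then obtain G where G: "\<And>r. G r \<in> borel_measurable M" "\<And>r. 0 \<le> r \<Longrightarrow> AE \<omega> in M. C r \<omega> = G r \<omega>"
    by metis
  have "AE \<omega> in M. \<forall>k::rat. 0 \<le> real_of_rat k \<longrightarrow> C (real_of_rat k) \<omega> = G (real_of_rat k) \<omega>"
    unfolding AE_all_countable by (auto intro: G(2))
  then obtain Z where Z: "Z \<in> null_sets M"
    and CG: "\<And>\<omega>. \<omega> \<in> space M - Z \<Longrightarrow> \<forall>k::rat. 0 \<le> real_of_rat k \<longrightarrow> C (real_of_rat k) \<omega> = G (real_of_rat k) \<omega>"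
    by (rule AE_E3) blast
  show thesis
  proof (rule that[OF Z G(1)])
    fix \<omega> and s :: real assume \<omega>: "\<omega> \<in> space M" "\<omega> \<notin> Z" and s: "0 \<le> s"
    have "((\<lambda>u. C u \<omega>) \<longlongrightarrow> C s \<omega>) (at_right s)"
      using right_cont[OF \<omega>(1) s] by (simp add: continuous_within)
    then have "(\<lambda>n. C (rat_above n s) \<omega>) \<longlonglongrightarrow> C s \<omega>"
      using filterlim_rat_above by (rule filterlim_compose)
    moreover have "C (rat_above n s) \<omega> = G (rat_above n s) \<omega>" for n
    proof -
      obtain k where "rat_above n s = real_of_rat k" using rat_above_Rats by (blast elim: Rats_cases)
      moreover have "0 \<le> rat_above n s" using rat_above_gt[of s n] s by simp
      ultimately show ?thesis using CG[of \<omega>] \<omega> by auto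
    qed
    ultimately show "(\<lambda>n. G (rat_above n s) \<omega>) \<longlonglongrightarrow> C s \<omega>" by simp
  qed
qed

lemma raise_floor_measurable_version:
  assumes Y: "\<And>s. Y s \<in> borel_measurable M" and C: "admissible M (nat_filtration M Y) c1 cbar C"
  obtains Z H where "Z \<in> null_sets M" "(\<lambda>(\<omega>, s). H \<omega> s) \<in> borel_measurable (M \<Otimes>\<^sub>M lborel)"
    "\<And>\<omega> s. \<omega> \<in> space M \<Longrightarrow> 0 \<le> s \<Longrightarrow> raise_floor Z c C s \<omega> = H \<omega> s"
proof -
  have "C r \<in> borel_measurable (completion M)" if "0 \<le> r" for r
    using adapted_measurable_completion[OF Y _ that] C by (auto simp: admissible_def)
  moreover have "continuous (at_right s) (\<lambda>u. C u \<omega>)" if "\<omega> \<in> space M" "0 \<le> s" for \<omega> s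
    using C that by (auto simp: admissible_def)
  ultimately obtain Z G where Z: "Z \<in> null_sets M" and G[measurable]: "\<And>r. G r \<in> borel_measurable M"
    and lim: "\<And>\<omega> s. \<omega> \<in> space M \<Longrightarrow> \<omega> \<notin> Z \<Longrightarrow> 0 \<le> s \<Longrightarrow> (\<lambda>n. G (rat_above n s) \<omega>) \<longlonglongrightarrow> C s \<omega>"
    by (rule right_continuous_measurable_version) blast+
  define H where "H \<omega> s = (if \<omega> \<in> Z then c else lim (\<lambda>n. max (G (rat_above n s) \<omega>) c))" for \<omega> s
  have [measurable]: "Z \<in> sets M" using Z by auto
  have "(\<lambda>z. H (fst z) (snd z)) \<in> borel_measurable (M \<Otimes>\<^sub>M lborel)"
    unfolding H_def by measurable
  then have "(\<lambda>(\<omega>, s). H \<omega> s) \<in> borel_measurable (M \<Otimes>\<^sub>M lborel)"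
    by (simp add: case_prod_beta')
  moreover have "raise_floor Z c C s \<omega> = H \<omega> s" if "\<omega> \<in> space M" "0 \<le> s" for \<omega> s
  proof (cases "\<omega> \<in> Z")
    case False
    then have "(\<lambda>n. max (G (rat_above n s) \<omega>) c) \<longlonglongrightarrow> max (C s \<omega>) c"
      using lim that by (intro tendsto_max tendsto_const) auto
    then show ?thesis using False by (simp add: raise_floor_def H_def limI)
  qed (simp add: raise_floor_def H_def)
  ultimately show thesis using Z that by blast
qed

section \<open>The Cramer-Lundberg model\<close>

locale cramer_lundberg = prob_space M for M :: "'w measure" +
  fixes E U :: "nat \<Rightarrow> 'w \<Rightarrow> real" and p \<beta> :: real
  assumes \<beta>_pos: "0 < \<beta>" and p_pos: "0 < p"
    and exponential: "\<And>n. distributed M lborel (E n) (exponential_density \<beta>)"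
    and U_measurable[measurable]: "\<And>n. U n \<in> borel_measurable M"
    and U_pos: "\<And>n \<omega>. \<omega> \<in> space M \<Longrightarrow> 0 < U n \<omega>"
    and indep: "indep_vars (\<lambda>_. borel) (\<lambda>i. case i of Inl n \<Rightarrow> E n | Inr n \<Rightarrow> U n) UNIV"
begin

lemma E_measurable[measurable]: "E n \<in> borel_measurable M"
  using distributed_measurable[OF exponential] by simp

lemma U_nonneg: "\<omega> \<in> space M \<Longrightarrow> 0 \<le> U n \<omega>"
  using U_pos less_imp_le by blast

lemma surplus_measurable_at: "surplus p E U x s \<in> borel_measurable M"
proof -
  have "(\<lambda>\<omega>. surplus p E U x ((\<lambda>_. s) \<omega>) \<omega>) \<in> borel_measurable M"
    by (rule surplus_measurable) auto
  then show ?thesis by simp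
qed

lemma AE_surplus_increment_le:
  "AE \<omega> in M. \<forall>t s. t \<le> s \<longrightarrow> surplus p E U x s \<omega> \<le> surplus p E U x t \<omega> + p * (s - t)"
  using AE_arrivals_locally_finite[OF exponential \<beta>_pos indep] AE_space
  by eventually_elim (blast intro: surplus_increment_le U_nonneg)

lemma payoff_bounds:
  assumes C: "admissible M (nat_filtration M (surplus p E U x)) c cbar C" and \<omega>: "\<omega> \<in> space M"
    and c: "p < c" and x: "0 \<le> x" and q: "0 \<le> q"
  shows "0 \<le> payoff q (surplus p E U x) C \<omega>" "payoff q (surplus p E U x) C \<omega> \<le> cbar * (x / (c - p))"
proof -
  have C\<omega>: "mono_on {0..} (\<lambda>t. C t \<omega>)" "\<And>t. t \<ge> 0 \<Longrightarrow> c \<le> C t \<omega>" "\<And>t. t \<ge> 0 \<Longrightarrow> C t \<omega> \<le> cbar"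
    using C \<omega> by (auto simp: admissible_def)
  show "0 \<le> payoff q (surplus p E U x) C \<omega>"
    using C\<omega>(2) c p_pos by (intro payoff_nonneg) (meson less_trans less_imp_le order_trans)
  show "payoff q (surplus p E U x) C \<omega> \<le> cbar * (x / (c - p))"
    using C\<omega> c x q p_pos U_nonneg[OF \<omega>]
    by (intro payoff_le[where X="surplus p E U x"]) (auto intro: surplus_le_linear)
qed

lemma Jfun_bounds:
  assumes C: "admissible M (nat_filtration M (surplus p E U x)) c cbar C"
    and c: "p < c" and x: "0 \<le> x" and q: "0 \<le> q"
  shows "0 \<le> Jfun M q (surplus p E U x) C" "Jfun M q (surplus p E U x) C \<le> cbar * (x / (c - p))"
proof -
  note bounds = payoff_bounds[OF C _ c x q]
  show "0 \<le> Jfun M q (surplus p E U x) C"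
    unfolding Jfun_def using bounds(1) by (intro integral_nonneg_AE AE_I2) auto
  obtain \<omega> where "\<omega> \<in> space M" using not_empty by blast
  then have "0 \<le> cbar * (x / (c - p))" using bounds(1,2) by (meson order_trans)
  then have "Jfun M q (surplus p E U x) C \<le> (\<integral>\<omega>. cbar * (x / (c - p)) \<partial>M)"
    unfolding Jfun_def using bounds(2) by (intro integral_le_nonneg_majorant AE_I2) auto
  then show "Jfun M q (surplus p E U x) C \<le> cbar * (x / (c - p))" by (simp add: prob_space)
qed

lemma integrable_payoff:
  assumes D: "admissible M (nat_filtration M (surplus p E U x)) c cbar D"
    and H: "(\<lambda>(\<omega>, s). H \<omega> s) \<in> borel_measurable (M \<Otimes>\<^sub>M lborel)"
    and DH: "\<And>\<omega> s. \<omega> \<in> space M \<Longrightarrow> 0 \<le> s \<Longrightarrow> D s \<omega> = H \<omega> s"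
    and c: "p < c" and x: "0 \<le> x" and q: "0 \<le> q"
  shows "integrable M (payoff q (surplus p E U x) D)"
proof -
  have D\<omega>: "mono_on {0..} (\<lambda>t. D t \<omega>)" "\<And>t. t \<ge> 0 \<Longrightarrow> c \<le> D t \<omega> \<and> D t \<omega> \<le> cbar"
    if "\<omega> \<in> space M" for \<omega>
    using D that by (auto simp: admissible_def)
  obtain \<omega> where "\<omega> \<in> space M" using not_empty by blast
  then have "0 < cbar" using D\<omega>(2)[of \<omega> 0] c p_pos by linarith
  have "payoff q (surplus p E U x) D \<in> borel_measurable M"
  proof (rule measurable_payoff[where H=H and cb=cbar])
    show "0 \<le> D s \<omega> \<and> D s \<omega> \<le> cbar" if "\<omega> \<in> space M" "0 \<le> s" for \<omega> s
      using D\<omega>(2)[OF that] c p_pos by auto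
  qed (use D\<omega>(1) H DH U_nonneg p_pos \<open>0 < cbar\<close> in auto)
  then show ?thesis
    using payoff_bounds[OF D _ c x q]
    by (intro integrable_const_bound[where B="cbar * (x / (c - p))"] AE_I2) auto
qed

lemma Jfun_le_Jfun_raise_floor:
  assumes C: "admissible M (nat_filtration M (surplus p E U x)) c1 cbar C"
    and c: "p < c1" "c1 \<le> c2" "c2 \<le> cbar" and x: "0 \<le> x" and q: "0 \<le> q"
  shows "\<exists>D. admissible M (nat_filtration M (surplus p E U x)) c2 cbar D \<and>
    Jfun M q (surplus p E U x) C \<le> Jfun M q (surplus p E U x) D + cbar * ((c2 - c1) * x / (c1 - p)^2)"
proof -
  let ?Y = "surplus p E U x"
  define K where "K = cbar * ((c2 - c1) * x / (c1 - p)^2)"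
  obtain Z H where Z: "Z \<in> null_sets M" and H: "(\<lambda>(\<omega>, s). H \<omega> s) \<in> borel_measurable (M \<Otimes>\<^sub>M lborel)"
    and ZH: "\<And>\<omega> s. \<omega> \<in> space M \<Longrightarrow> 0 \<le> s \<Longrightarrow> raise_floor Z c2 C s \<omega> = H \<omega> s"
    using raise_floor_measurable_version[OF surplus_measurable_at C, where c=c2] by blast
  define D where "D = raise_floor Z c2 C"
  have D: "admissible M (nat_filtration M ?Y) c2 cbar D"
    unfolding D_def using C Z c(2,3) by (rule admissible_raise_floor)
  have C\<omega>: "mono_on {0..} (\<lambda>t. C t \<omega>)" "\<And>t. t \<ge> 0 \<Longrightarrow> c1 \<le> C t \<omega> \<and> C t \<omega> \<le> cbar"
    if "\<omega> \<in> space M" for \<omega>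
    using C that by (auto simp: admissible_def)
  have D\<omega>: "mono_on {0..} (\<lambda>t. D t \<omega>)" if "\<omega> \<in> space M" for \<omega>
    using D that by (auto simp: admissible_def)
  have "0 < cbar" using c p_pos by linarith
  have int_D: "integrable M (payoff q ?Y D)"
    using ZH c x q by (intro integrable_payoff[OF D H]) (auto simp: D_def)
  have "0 \<le> K" using c x \<open>0 < cbar\<close> by (simp add: K_def)
  have cmp: "AE \<omega> in M. payoff q ?Y C \<omega> \<le> payoff q ?Y D \<omega> + K"
    using AE_surplus_increment_le[of x] AE_not_in[OF Z] AE_space
  proof eventually_elim
    case (elim \<omega>)
    then have "D t \<omega> = max (C t \<omega>) c2" for t by (simp add: D_def raise_floor_def)
    then show ?case unfolding K_def
      using C\<omega>[OF elim(3)] D\<omega>[OF elim(3)] elim(1) c x q p_pos U_nonneg[OF elim(3)]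
      by (intro payoff_le_delay[where X="?Y"]) (auto intro: surplus_le_linear)
  qed
  have "Jfun M q ?Y C \<le> (\<integral>\<omega>. payoff q ?Y D \<omega> + K \<partial>M)"
    unfolding Jfun_def
  proof (rule integral_le_nonneg_majorant[OF _ cmp])
    show "integrable M (\<lambda>\<omega>. payoff q ?Y D \<omega> + K)" using int_D by simp
    show "AE \<omega> in M. 0 \<le> payoff q ?Y D \<omega> + K"
      using payoff_bounds(1)[OF D _ _ x q] c \<open>0 \<le> K\<close> by (intro AE_I2) (simp add: add_nonneg_nonneg)
  qed
  also have "\<dots> = Jfun M q ?Y D + K"
    using int_D by (simp add: Jfun_def prob_space)
  finally show ?thesis using D unfolding K_def by blast
qed

lemma Vfun_diff_le:
  assumes c: "p < c1" "c1 \<le> c2" "c2 \<le> cbar" and x: "0 \<le> x" and q: "0 \<le> q"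
  shows "Vfun M p E U q cbar x c1 - Vfun M p E U q cbar x c2 \<le> cbar * ((c2 - c1) * x / (c1 - p)^2)"
proof -
  let ?A = "\<lambda>c. {C. admissible M (nat_filtration M (surplus p E U x)) c cbar C}"
  let ?J = "Jfun M q (surplus p E U x)"
  have "?A c1 \<noteq> {}" using admissible_const[of c1 cbar] c by auto
  have "bdd_above (?J ` ?A c2)"
    using Jfun_bounds(2)[OF _ _ x q] c by (intro bdd_aboveI2[where M="cbar * (x / (c2 - p))"]) auto
  have "(SUP C\<in>?A c1. ?J C) \<le> (SUP D\<in>?A c2. ?J D) + cbar * ((c2 - c1) * x / (c1 - p)^2)"
  proof (rule cSUP_least[OF \<open>?A c1 \<noteq> {}\<close>])
    fix C assume "C \<in> ?A c1"
    then obtain D where D: "D \<in> ?A c2" "?J C \<le> ?J D + cbar * ((c2 - c1) * x / (c1 - p)^2)"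
      using Jfun_le_Jfun_raise_floor[OF _ c x q] by blast
    have "?J D \<le> (SUP D\<in>?A c2. ?J D)"
      using D(1) \<open>bdd_above (?J ` ?A c2)\<close> by (rule cSUP_upper)
    then show "?J C \<le> (SUP D\<in>?A c2. ?J D) + cbar * ((c2 - c1) * x / (c1 - p)^2)"
      using D(2) by simp
  qed
  then show ?thesis by (simp add: Vfun_def)
qed

end

theorem lemma9p4:
  fixes M :: "'w measure" and E U :: "nat \<Rightarrow> 'w \<Rightarrow> real" and F :: "real \<Rightarrow> real"
    and p \<beta> q cbar K :: real
  assumes "prob_space M"
    and "\<beta> > 0" and "p > 0" and "q > 0" and "cbar > 0"
    and "\<forall>n. distributed M lborel (E n) (exponential_density \<beta>)"
    and "\<forall>n. U n \<in> borel_measurable M"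
    and "\<forall>n. \<forall>\<omega>\<in>space M. U n \<omega> > 0"
    and "\<forall>n y. measure M {\<omega>\<in>space M. U n \<omega> \<le> y} = F y"
    and "prob_space.indep_vars M (\<lambda>_. borel) (\<lambda>i. case i of Inl n \<Rightarrow> E n | Inr n \<Rightarrow> U n) UNIV"
    and "continuous_on UNIV F"
    and "integrable M (U 0)" and "p > \<beta> * (\<integral>\<omega>. U 0 \<omega> \<partial>M)"
    and "\<forall>x y. x < y \<longrightarrow> 0 \<le> F y - F x \<and> F y - F x \<le> K * (y - x)"
    and "cbar > p"
  shows "\<exists>K2>0. \<exists>K3>0. \<forall>x c1 c2. 0 \<le> x \<longrightarrow> p < c1 \<longrightarrow> c1 \<le> c2 \<longrightarrow> c2 \<le> cbar \<longrightarrow>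
           Vfun M p E U q cbar x c1 - Vfun M p E U q cbar x c2
             \<le> (K2 + K3 * x / (c1 - p)^2) * (c2 - c1)"
proof -
  interpret cramer_lundberg M E U p \<beta>
    using assms(2,3,6-8,10)
    by (intro cramer_lundberg.intro[OF assms(1)] cramer_lundberg_axioms.intro) auto
  have "Vfun M p E U q cbar x c1 - Vfun M p E U q cbar x c2 \<le> (1 + cbar * x / (c1 - p)^2) * (c2 - c1)"
    if "0 \<le> x" "p < c1" "c1 \<le> c2" "c2 \<le> cbar" for x c1 c2
  proof -
    have "Vfun M p E U q cbar x c1 - Vfun M p E U q cbar x c2 \<le> cbar * ((c2 - c1) * x / (c1 - p)^2)"
      using that assms(4) by (intro Vfun_diff_le) auto
    also have "\<dots> \<le> (1 + cbar * x / (c1 - p)^2) * (c2 - c1)"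
      using that by (simp add: algebra_simps)
    finally show ?thesis .
  qed
  then show ?thesis using assms(5) by (intro exI[of _ 1] exI[of _ cbar]) auto
qed

end
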